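(* Let $k$ be a field with $1/2\in k$, let $A=k[[x_1,\dots,x_d]]$ and $B=A[[x_0]]$, with maximal ideal $\mathfrak m_B$. Let $F=x_0^2+x_1^2+\cdots+x_d^2+G$ with $G\in\mathfrak m_B^3$. Then there exist a unit $v_0\in B$, an element $a_0\in(x_1,\dots,x_d)B$ and an element $G_1\in(x_1,\dots,x_d)^3B$ such that $$F=v_0(x_0+a_0)^2+x_1^2+\cdots+x_d^2+G_1.$$ *)

theory Defs
  imports Main "HOL-Library.Poly_Mapping"
begin

text \<open>Formal power series over a field k in the variables x_0, x_1, ...,
  represented as coefficient functions on exponent vectors (monomials)
  of type nat =>0 nat.  The ring B = k[[x_0,...,x_d]] consists of those
  series whose coefficients vanish on monomials involving a variable x_i with i > d.\<close>

type_synonym 'a pser = "(nat \<Rightarrow>\<^sub>0 nat) \<Rightarrow> 'a"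

definition ps_in :: "nat \<Rightarrow> 'a::zero pser \<Rightarrow> bool" where
  "ps_in d f \<longleftrightarrow> (\<forall>m. f m \<noteq> 0 \<longrightarrow> Poly_Mapping.keys m \<subseteq> {0..d})"

definition ps_add :: "'a::plus pser \<Rightarrow> 'a pser \<Rightarrow> 'a pser" where
  "ps_add f g = (\<lambda>m. f m + g m)"

definition ps_sum :: "('i \<Rightarrow> 'a::comm_monoid_add pser) \<Rightarrow> 'i set \<Rightarrow> 'a pser" where
  "ps_sum f I = (\<lambda>m. \<Sum>i\<in>I. f i m)"

text \<open>Cauchy product; the index set is finite for every m.\<close>
definition ps_mult :: "'a::comm_semiring_1 pser \<Rightarrow> 'a pser \<Rightarrow> 'a pser" where
  "ps_mult f g = (\<lambda>m. \<Sum>p\<in>{p. fst p + snd p = m}. f (fst p) * g (snd p))"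

definition ps_monom :: "(nat \<Rightarrow>\<^sub>0 nat) \<Rightarrow> 'a::{zero,one} pser" where
  "ps_monom \<mu> = (\<lambda>m. if m = \<mu> then 1 else 0)"

definition ps_one :: "'a::{zero,one} pser" where
  "ps_one = ps_monom 0"

definition ps_var :: "nat \<Rightarrow> 'a::{zero,one} pser" where
  "ps_var i = ps_monom (Poly_Mapping.single i 1)"

definition ps_unit :: "nat \<Rightarrow> 'a::comm_semiring_1 pser \<Rightarrow> bool" where
  "ps_unit d f \<longleftrightarrow> (\<exists>g. ps_in d g \<and> ps_mult f g = ps_one)"

definition mdeg :: "(nat \<Rightarrow>\<^sub>0 nat) \<Rightarrow> nat" where
  "mdeg \<mu> = (\<Sum>i\<in>Poly_Mapping.keys \<mu>. Poly_Mapping.lookup \<mu> i)"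

text \<open>Membership in the ideal (x_i : i \<in> S)^n B of B = k[[x_0..x_d]]:
  f is a B-linear combination of the monomials of degree n in the variables x_i, i \<in> S
  (these generate the n-th power of the ideal).\<close>
definition ps_in_ideal_pow :: "nat \<Rightarrow> nat set \<Rightarrow> nat \<Rightarrow> 'a::comm_semiring_1 pser \<Rightarrow> bool" where
  "ps_in_ideal_pow d S n f \<longleftrightarrow>
     (\<exists>h. (\<forall>\<mu>. ps_in d (h \<mu>)) \<and>
          f = ps_sum (\<lambda>\<mu>. ps_mult (ps_monom \<mu>) (h \<mu>)) {\<mu>. Poly_Mapping.keys \<mu> \<subseteq> S \<and> mdeg \<mu> = n})"

end

theory Submission
  imports Defs "HOL-Computational_Algebra.Formal_Power_Series"
begin

(* Grade power series by the degree in x_1, ..., x_d (the y-degree).  Since G has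
   order at least 3, the y-degree-0 part of x_0^2 + G is x_0^2 u with u a unit in k[[x_0]].  Put
   H = (x_0^2 + G) / u: its y-degree-0 part is exactly x_0^2, and its parts H_1, H_2 of y-degree 1
   and 2 are divisible by x_0^2 and x_0 respectively.  With 2 x_0 A_1 = H_1 and
   2 x_0 A_2 = H_2 - A_1^2, the series a = A_1 + A_2 makes H - (x_0 + a)^2 of y-degree at least 3,
   so F = u (x_0 + a)^2 + (x_1^2 + ... + x_d^2) + u (H - (x_0 + a)^2).  The whole argument takes
   place in the power series ring in all variables x_0, x_1, ...; setting the variables beyond x_d
   to zero, a ring homomorphism, brings the witnesses back into k[[x_0, ..., x_d]]. *)

section \<open>Monomials\<close>

(* Exponent vectors are never meant as elements of the monoid algebra: keep
   Poly_Mapping.single 0 2 from being rewritten to the numeral 2. *)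
declare single_numeral [simp del]

lemma keys_add_nat:
  "Poly_Mapping.keys (\<mu> + \<nu>) = Poly_Mapping.keys \<mu> \<union> Poly_Mapping.keys (\<nu> :: nat \<Rightarrow>\<^sub>0 nat)"
  by (auto simp: in_keys_iff lookup_add)

lemma single_lookup_eq_if_keys_subset:
  "Poly_Mapping.keys \<mu> \<subseteq> {i} \<Longrightarrow> Poly_Mapping.single i (Poly_Mapping.lookup \<mu> i) = \<mu>"
  by (rule poly_mapping_eqI) (auto simp: lookup_single when_def in_keys_iff)

lemma lookup_le_mdeg: "Poly_Mapping.lookup \<mu> i \<le> mdeg \<mu>"
  by (cases "i \<in> Poly_Mapping.keys \<mu>") (auto simp: mdeg_def member_le_sum in_keys_iff)

lemma mdeg_zero [simp]: "mdeg 0 = 0"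
  by (simp add: mdeg_def)

lemma mdeg_single [simp]: "mdeg (Poly_Mapping.single i k) = k"
  by (simp add: mdeg_def)

lemma mdeg_add: "mdeg (\<mu> + \<nu>) = mdeg \<mu> + mdeg \<nu>"
  unfolding mdeg_def by (rule setsum_keys_plus_distrib) auto

lemma finite_monomials_mdeg_le:
  assumes "finite I"
  shows "finite {\<mu>. Poly_Mapping.keys \<mu> \<subseteq> I \<and> mdeg \<mu> \<le> n}"
proof -
  let ?M = "{\<mu>. Poly_Mapping.keys \<mu> \<subseteq> I \<and> mdeg \<mu> \<le> n}"
  have "inj_on (\<lambda>\<mu>. restrict (Poly_Mapping.lookup \<mu>) I) ?M"
  proof (rule inj_onI)
    fix \<mu> \<nu> assume "\<mu> \<in> ?M" "\<nu> \<in> ?M" "restrict (Poly_Mapping.lookup \<mu>) I = restrict (Poly_Mapping.lookup \<nu>) I"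
    then show "\<mu> = \<nu>"
      by (intro poly_mapping_eqI) (metis in_keys_iff restrict_apply' subsetD mem_Collect_eq)
  qed
  moreover have "(\<lambda>\<mu>. restrict (Poly_Mapping.lookup \<mu>) I) ` ?M \<subseteq> PiE I (\<lambda>_. {..n})"
    by (auto intro: le_trans[OF lookup_le_mdeg])
  moreover have "finite (PiE I (\<lambda>_. {..n}))"
    using assms by (simp add: finite_PiE)
  ultimately show ?thesis
    by (meson finite_imageD finite_subset)
qed

lemma finite_summand_pairs:
  "finite {p :: (nat \<Rightarrow>\<^sub>0 nat) \<times> (nat \<Rightarrow>\<^sub>0 nat). fst p + snd p = m}"
proof -
  let ?D = "{\<mu>. Poly_Mapping.keys \<mu> \<subseteq> Poly_Mapping.keys m \<and> mdeg \<mu> \<le> mdeg m}"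
  have "{p. fst p + snd p = m} \<subseteq> ?D \<times> ?D"
    by (auto simp: keys_add_nat mdeg_add)
  moreover have "finite ?D"
    by (simp add: finite_monomials_mdeg_le)
  ultimately show ?thesis
    by (simp add: finite_subset)
qed

definition deg_on :: "nat set \<Rightarrow> (nat \<Rightarrow>\<^sub>0 nat) \<Rightarrow> nat" where
  "deg_on S \<mu> = (\<Sum>i \<in> Poly_Mapping.keys \<mu> \<inter> S. Poly_Mapping.lookup \<mu> i)"

abbreviation ydeg :: "(nat \<Rightarrow>\<^sub>0 nat) \<Rightarrow> nat" where
  "ydeg \<equiv> deg_on (- {0})"

lemma deg_on_zero [simp]: "deg_on S 0 = 0"
  by (simp add: deg_on_def)

lemma deg_on_add: "deg_on S (\<mu> + \<nu>) = deg_on S \<mu> + deg_on S \<nu>"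
proof -
  let ?f = "\<lambda>i k. if i \<in> S then k else (0::nat)"
  have "(\<Sum>i\<in>Poly_Mapping.keys (\<mu> + \<nu>). ?f i (Poly_Mapping.lookup (\<mu> + \<nu>) i)) =
      (\<Sum>i\<in>Poly_Mapping.keys \<mu>. ?f i (Poly_Mapping.lookup \<mu> i)) +
      (\<Sum>i\<in>Poly_Mapping.keys \<nu>. ?f i (Poly_Mapping.lookup \<nu> i))"
    by (rule setsum_keys_plus_distrib) auto
  then show ?thesis
    by (simp add: deg_on_def sum.inter_restrict)
qed

lemma deg_on_insert: "i \<notin> S \<Longrightarrow> deg_on (insert i S) \<mu> = Poly_Mapping.lookup \<mu> i + deg_on S \<mu>"
  by (cases "i \<in> Poly_Mapping.keys \<mu>") (auto simp: deg_on_def in_keys_iff Int_insert_right)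

lemma deg_on_le_mdeg: "deg_on S \<mu> \<le> mdeg \<mu>"
  unfolding deg_on_def mdeg_def by (rule sum_mono2) auto

lemma deg_on_eq_mdeg: "Poly_Mapping.keys \<mu> \<subseteq> S \<Longrightarrow> deg_on S \<mu> = mdeg \<mu>"
  by (simp add: deg_on_def mdeg_def Int_absorb2)

lemma deg_on_cong_keys: "Poly_Mapping.keys \<mu> \<inter> S = Poly_Mapping.keys \<mu> \<inter> T \<Longrightarrow> deg_on S \<mu> = deg_on T \<mu>"
  by (simp add: deg_on_def)

lemma mdeg_eq_lookup0_plus_ydeg: "mdeg \<mu> = Poly_Mapping.lookup \<mu> 0 + ydeg \<mu>"
proof -
  have "insert 0 (- {0}) = (UNIV :: nat set)"
    by blast
  then have "mdeg \<mu> = deg_on (insert 0 (- {0})) \<mu>"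
    by (simp add: mdeg_def deg_on_def)
  then show ?thesis
    by (simp add: deg_on_insert)
qed

lemma ydeg_eq_0_iff: "ydeg \<mu> = 0 \<longleftrightarrow> Poly_Mapping.keys \<mu> \<subseteq> {0}"
  by (auto simp: deg_on_def in_keys_iff)

lemma ydeg_single0 [simp]: "ydeg (Poly_Mapping.single 0 k) = 0"
  by (simp add: ydeg_eq_0_iff)

lemma ydeg_add_single0 [simp]: "ydeg (m + Poly_Mapping.single 0 k) = ydeg m"
  by (simp add: deg_on_add)

section \<open>The ring of formal power series\<close>

lemma ps_mult_assoc: "ps_mult (ps_mult f g) h = ps_mult f (ps_mult g (h :: 'a::comm_semiring_1 pser))"
proof
  fix m
  let ?P = "\<lambda>m. {p :: (nat \<Rightarrow>\<^sub>0 nat) \<times> (nat \<Rightarrow>\<^sub>0 nat). fst p + snd p = m}"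
  have "ps_mult (ps_mult f g) h m =
      (\<Sum>(p, q) \<in> Sigma (?P m) (\<lambda>p. ?P (fst p)). f (fst q) * g (snd q) * h (snd p))"
    by (simp add: ps_mult_def sum_distrib_right sum.Sigma finite_summand_pairs)
  also have "\<dots> = (\<Sum>(p, q) \<in> Sigma (?P m) (\<lambda>p. ?P (snd p)). f (fst p) * (g (fst q) * h (snd q)))"
    by (rule sum.reindex_bij_witness[where j = "\<lambda>((x, c), (a, b)). ((a, b + c), (b, c))"
          and i = "\<lambda>((a, y), (b, c)). ((a + b, c), (a, b))"])
      (auto simp: mult.assoc add.assoc)
  also have "\<dots> = ps_mult f (ps_mult g h) m"
    by (simp add: ps_mult_def sum_distrib_left sum.Sigma finite_summand_pairs)
  finally show "ps_mult (ps_mult f g) h m = ps_mult f (ps_mult g h) m" .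
qed

lemma ps_mult_commute: "ps_mult f g = ps_mult g (f :: 'a::comm_semiring_1 pser)"
  unfolding ps_mult_def
  by (intro ext sum.reindex_bij_witness[where j = "\<lambda>(a, b). (b, a)" and i = "\<lambda>(a, b). (b, a)"])
    (auto simp: add.commute mult.commute)

lemma ps_one_mult: "ps_mult ps_one f = (f :: 'a::comm_semiring_1 pser)"
proof
  fix m
  have "ps_mult ps_one f m = (\<Sum>p | fst p + snd p = m. if p = (0, m) then f m else 0)"
    unfolding ps_mult_def ps_one_def ps_monom_def by (rule sum.cong) auto
  then show "ps_mult ps_one f m = f m"
    by (simp add: finite_summand_pairs)
qed

lemma ps_add_mult_distrib:
  "ps_mult (ps_add f g) h = ps_add (ps_mult f h) (ps_mult g (h :: 'a::comm_semiring_1 pser))"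
  by (auto simp: ps_mult_def ps_add_def distrib_right sum.distrib)

typedef 'a mps = "UNIV :: 'a pser set"
  morphisms mps_nth Abs_mps ..

setup_lifting type_definition_mps

instantiation mps :: (comm_ring_1) comm_ring_1
begin

lift_definition zero_mps :: "'a mps" is "\<lambda>_. 0" .
lift_definition one_mps :: "'a mps" is ps_one .
lift_definition plus_mps :: "'a mps \<Rightarrow> 'a mps \<Rightarrow> 'a mps" is ps_add .
lift_definition uminus_mps :: "'a mps \<Rightarrow> 'a mps" is "\<lambda>f m. - f m" .
lift_definition minus_mps :: "'a mps \<Rightarrow> 'a mps \<Rightarrow> 'a mps" is "\<lambda>f g m. f m - g m" .
lift_definition times_mps :: "'a mps \<Rightarrow> 'a mps \<Rightarrow> 'a mps" is ps_mult .

instance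
proof
  fix a b c :: "'a mps"
  show "a * b * c = a * (b * c)" by transfer (rule ps_mult_assoc)
  show "a * b = b * a" by transfer (rule ps_mult_commute)
  show "1 * a = a" by transfer (rule ps_one_mult)
  show "(a + b) * c = a * c + b * c" by transfer (rule ps_add_mult_distrib)
  show "a + b + c = a + (b + c)" by transfer (simp add: ps_add_def add.assoc)
  show "a + b = b + a" by transfer (simp add: ps_add_def add.commute)
  show "0 + a = a" by transfer (simp add: ps_add_def)
  show "- a + a = 0" by transfer (simp add: ps_add_def)
  show "a - b = a + - b" by transfer (simp add: ps_add_def)
  show "(0::'a mps) \<noteq> 1" by transfer (auto simp: ps_one_def ps_monom_def fun_eq_iff)
qed

end

lemma mps_eqI: "(\<And>m. mps_nth f m = mps_nth g m) \<Longrightarrow> f = g"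
  by transfer auto

lemma mps_nth_Abs_mps [simp]: "mps_nth (Abs_mps f) = f"
  by (simp add: Abs_mps_inverse)

lemma mps_nth_zero [simp]: "mps_nth 0 m = 0"
  by (simp add: zero_mps.rep_eq)

lemma mps_nth_one: "mps_nth 1 m = (if m = 0 then 1 else 0)"
  by (simp add: one_mps.rep_eq ps_one_def ps_monom_def)

lemma mps_nth_add [simp]: "mps_nth (f + g) m = mps_nth f m + mps_nth g m"
  by (simp add: plus_mps.rep_eq ps_add_def)

lemma mps_nth_diff [simp]: "mps_nth (f - g) m = mps_nth f m - mps_nth g m"
  by (simp add: minus_mps.rep_eq)

lemma mps_nth_mult:
  "mps_nth (f * g) m = (\<Sum>p | fst p + snd p = m. mps_nth f (fst p) * mps_nth g (snd p))"
  by (simp add: times_mps.rep_eq ps_mult_def)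

lemma mps_nth_sum: "mps_nth (sum f A) m = (\<Sum>a\<in>A. mps_nth (f a) m)"
  by (induction A rule: infinite_finite_induct) auto

definition mps_supp :: "'a::comm_ring_1 mps \<Rightarrow> (nat \<Rightarrow>\<^sub>0 nat) set" where
  "mps_supp f = {m. mps_nth f m \<noteq> 0}"

lemma mps_nth_eq_0_outside_supp: "mps_supp f \<subseteq> A \<Longrightarrow> m \<notin> A \<Longrightarrow> mps_nth f m = 0"
  by (auto simp: mps_supp_def)

lemma mps_supp_add: "mps_supp (f + g) \<subseteq> mps_supp f \<union> mps_supp g"
  by (auto simp: mps_supp_def)

lemma mps_supp_diff: "mps_supp (f - g) \<subseteq> mps_supp f \<union> mps_supp g"
  by (auto simp: mps_supp_def)

lemma mps_supp_add_subset: "mps_supp f \<subseteq> A \<Longrightarrow> mps_supp g \<subseteq> A \<Longrightarrow> mps_supp (f + g) \<subseteq> A"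
  using mps_supp_add by blast

lemma mps_supp_diff_subset: "mps_supp f \<subseteq> A \<Longrightarrow> mps_supp g \<subseteq> A \<Longrightarrow> mps_supp (f - g) \<subseteq> A"
  using mps_supp_diff by blast

lemma mps_supp_sum_subset: "(\<And>i. i \<in> I \<Longrightarrow> mps_supp (f i) \<subseteq> A) \<Longrightarrow> mps_supp (sum f I) \<subseteq> A"
proof (induction I rule: infinite_finite_induct)
  case (insert i I)
  then show ?case
    by (simp add: mps_supp_add_subset)
qed (auto simp: mps_supp_def)

lemma mps_supp_mult_subset:
  assumes "mps_supp f \<subseteq> A" and "mps_supp g \<subseteq> B"
    and "\<And>p q. p \<in> A \<Longrightarrow> q \<in> B \<Longrightarrow> p + q \<in> C"
  shows "mps_supp (f * g) \<subseteq> C"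
proof
  fix m assume "m \<in> mps_supp (f * g)"
  then have "(\<Sum>p | fst p + snd p = m. mps_nth f (fst p) * mps_nth g (snd p)) \<noteq> 0"
    by (simp add: mps_supp_def mps_nth_mult)
  then obtain p where "p \<in> {p. fst p + snd p = m}" "mps_nth f (fst p) * mps_nth g (snd p) \<noteq> 0"
    by (rule sum.not_neutral_contains_not_neutral)
  then have m: "fst p + snd p = m" and "mps_nth f (fst p) * mps_nth g (snd p) \<noteq> 0"
    by simp_all
  then have "fst p \<in> A" "snd p \<in> B"
    using assms(1,2) by (auto simp: mps_supp_def)
  then show "m \<in> C"
    using assms(3) m by blast
qed

lift_definition mps_monom :: "(nat \<Rightarrow>\<^sub>0 nat) \<Rightarrow> 'a::comm_ring_1 mps" is ps_monom .

lift_definition mps_var :: "nat \<Rightarrow> 'a::comm_ring_1 mps" is ps_var .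

lemma mps_var_eq_monom: "mps_var i = mps_monom (Poly_Mapping.single i 1)"
  by (rule mps_eqI) (simp add: mps_var.rep_eq mps_monom.rep_eq ps_var_def)

lemma mps_nth_monom: "mps_nth (mps_monom \<mu>) m = (if m = \<mu> then 1 else 0)"
  by (simp add: mps_monom.rep_eq ps_monom_def)

lemma mps_one_eq_monom: "1 = mps_monom 0"
  by (rule mps_eqI) (simp add: mps_nth_one mps_nth_monom)

lemma mps_supp_monom: "mps_supp (mps_monom \<mu>) = {\<mu>}"
  by (simp add: mps_supp_def mps_nth_monom)

lemma mps_nth_monom_mult:
  "mps_nth (mps_monom \<mu> * f) m = (if \<exists>r. m = \<mu> + r then mps_nth f (m - \<mu>) else 0)"
proof (cases "\<exists>r. m = \<mu> + r")
  case True
  then obtain r where m: "m = \<mu> + r" by blast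
  have "mps_nth (mps_monom \<mu> * f) m = (\<Sum>p | fst p + snd p = m. if p = (\<mu>, r) then mps_nth f r else 0)"
    unfolding mps_nth_mult mps_nth_monom by (rule sum.cong) (auto simp: m)
  also have "\<dots> = mps_nth f r"
    using m by (simp add: finite_summand_pairs)
  finally show ?thesis
    using m by simp
next
  case False
  then show ?thesis
    unfolding mps_nth_mult mps_nth_monom by (auto intro!: sum.neutral)
qed

lemma mps_monom_mult: "mps_monom \<mu> * mps_monom \<nu> = mps_monom (\<mu> + \<nu>)"
  by (rule mps_eqI) (auto simp: mps_nth_monom_mult mps_nth_monom)

lemma Abs_mps_ps_ops:
  "Abs_mps (ps_var i) = mps_var i"
  "Abs_mps (ps_monom \<mu>) = mps_monom \<mu>"
  "Abs_mps ps_one = 1"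
  "Abs_mps (ps_add f g) = Abs_mps f + Abs_mps g"
  "Abs_mps (ps_mult f g) = Abs_mps f * Abs_mps g"
  "Abs_mps (ps_sum h I) = (\<Sum>i\<in>I. Abs_mps (h i))"
  by (simp_all add: mps_var.abs_eq mps_monom.abs_eq one_mps.abs_eq plus_mps.abs_eq times_mps.abs_eq)
    (rule mps_eqI, simp add: ps_sum_def mps_nth_sum)

lemma pser_eqI: "Abs_mps f = Abs_mps g \<Longrightarrow> f = g"
  by (simp add: Abs_mps_inject)

lift_definition mps_div_var :: "nat \<Rightarrow> 'a::comm_ring_1 mps \<Rightarrow> 'a mps"
  is "\<lambda>i f m. f (m + Poly_Mapping.single i 1)" .

lemma mps_supp_div_var:
  "mps_supp (mps_div_var i f) = {m. m + Poly_Mapping.single i 1 \<in> mps_supp f}"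
  by (simp add: mps_supp_def mps_div_var.rep_eq)

lemma mps_var_mult_div_var:
  assumes "mps_supp f \<subseteq> {m. 1 \<le> Poly_Mapping.lookup m i}"
  shows "mps_var i * mps_div_var i f = f"
proof (rule mps_eqI)
  fix m
  let ?e = "Poly_Mapping.single i 1"
  show "mps_nth (mps_var i * mps_div_var i f) m = mps_nth f m"
  proof (cases "1 \<le> Poly_Mapping.lookup m i")
    case True
    then have m: "?e + (m - ?e) = m"
      by (intro poly_mapping_eqI) (auto simp: lookup_add lookup_minus lookup_single when_def)
    then have "\<exists>r. m = ?e + r"
      by metis
    then have "mps_nth (mps_var i * mps_div_var i f) m = mps_nth f (m - ?e + ?e)"
      by (simp add: mps_var_eq_monom mps_nth_monom_mult mps_div_var.rep_eq)
    with m show ?thesis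
      by (simp add: add.commute)
  next
    case False
    then have "\<nexists>r. m = ?e + r"
      by (auto simp: lookup_add)
    moreover have "mps_nth f m = 0"
      using assms False by (auto simp: mps_supp_def)
    ultimately show ?thesis
      by (simp add: mps_var_eq_monom mps_nth_monom_mult)
  qed
qed

lift_definition mps_smult :: "'a \<Rightarrow> 'a::comm_ring_1 mps \<Rightarrow> 'a mps" is "\<lambda>c f m. c * f m" .

lemma mps_supp_smult: "mps_supp (mps_smult c f) \<subseteq> mps_supp f"
  by (auto simp: mps_supp_def mps_smult.rep_eq)

lemma mps_half_add_half:
  assumes "(2::'a::field) \<noteq> 0"
  shows "mps_smult (1 / 2) f + mps_smult (1 / 2) f = (f :: 'a mps)"
proof (rule mps_eqI)
  fix m
  have "mps_nth (mps_smult (1 / 2) f + mps_smult (1 / 2) f) m = 1 / 2 * mps_nth f m + 1 / 2 * mps_nth f m"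
    by (simp only: mps_nth_add mps_smult.rep_eq)
  also have "\<dots> = mps_nth f m"
    using assms by (simp add: field_simps)
  finally show "mps_nth (mps_smult (1 / 2) f + mps_smult (1 / 2) f) m = mps_nth f m" .
qed

lift_definition ydeg_part :: "nat \<Rightarrow> 'a::comm_ring_1 mps \<Rightarrow> 'a mps"
  is "\<lambda>j f m. if ydeg m = j then f m else 0" .

lemma mps_supp_ydeg_part: "mps_supp (ydeg_part j f) = mps_supp f \<inter> {m. ydeg m = j}"
  by (auto simp: mps_supp_def ydeg_part.rep_eq)

lemma ydeg_part_mult_x0_series:
  assumes "mps_supp g \<subseteq> {m. ydeg m = 0}"
  shows "ydeg_part j (f * g) = ydeg_part j f * g"
proof (rule mps_eqI)
  fix m
  have summand: "(if ydeg (fst p) = j then mps_nth f (fst p) else 0) * mps_nth g (snd p) =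
      (if ydeg m = j then mps_nth f (fst p) * mps_nth g (snd p) else 0)"
    if "p \<in> {p. fst p + snd p = m}" for p
  proof (cases "mps_nth g (snd p) = 0")
    case False
    then have "ydeg (snd p) = 0"
      using assms by (auto simp: mps_supp_def)
    then have "ydeg m = ydeg (fst p)"
      using that by (auto simp: deg_on_add)
    then show ?thesis
      by simp
  qed simp
  have "mps_nth (ydeg_part j f * g) m =
      (\<Sum>p | fst p + snd p = m. if ydeg m = j then mps_nth f (fst p) * mps_nth g (snd p) else 0)"
    unfolding mps_nth_mult ydeg_part.rep_eq by (rule sum.cong) (simp_all add: summand)
  then show "mps_nth (ydeg_part j (f * g)) m = mps_nth (ydeg_part j f * g) m"
    by (cases "ydeg m = j") (simp_all add: ydeg_part.rep_eq mps_nth_mult)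
qed

lemma mps_supp_diff_ydeg_parts: "mps_supp (f - (\<Sum>j<n. ydeg_part j f)) \<subseteq> {m. n \<le> ydeg m}"
  by (auto simp: mps_supp_def mps_nth_sum ydeg_part.rep_eq)

lemma summand_pairs_single:
  fixes i k :: nat
  shows "{p. fst p + snd p = Poly_Mapping.single i k} =
    (\<lambda>t. (Poly_Mapping.single i t, Poly_Mapping.single i (k - t))) ` {..k}"
proof (intro equalityI subsetI)
  fix p :: "(nat \<Rightarrow>\<^sub>0 nat) \<times> (nat \<Rightarrow>\<^sub>0 nat)"
  assume "p \<in> {p. fst p + snd p = Poly_Mapping.single i k}"
  then have sum: "fst p + snd p = Poly_Mapping.single i k" by simp
  then have "Poly_Mapping.keys (fst p) \<subseteq> {i}" "Poly_Mapping.keys (snd p) \<subseteq> {i}"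
    by (metis Un_upper1 Un_upper2 keys_add_nat keys_single order_trans empty_subsetI
          insert_subset subset_insertI)+
  then have "fst p = Poly_Mapping.single i (Poly_Mapping.lookup (fst p) i)"
      "snd p = Poly_Mapping.single i (Poly_Mapping.lookup (snd p) i)"
    by (simp_all add: single_lookup_eq_if_keys_subset)
  moreover have "Poly_Mapping.lookup (fst p) i + Poly_Mapping.lookup (snd p) i = k"
    using arg_cong[OF sum, of "\<lambda>\<mu>. Poly_Mapping.lookup \<mu> i"] by (simp add: lookup_add)
  ultimately show "p \<in> (\<lambda>t. (Poly_Mapping.single i t, Poly_Mapping.single i (k - t))) ` {..k}"
    by (intro image_eqI[where x = "Poly_Mapping.lookup (fst p) i"]) (auto simp: prod_eq_iff)
qed (auto simp flip: single_add)

lift_definition mps_of_fps :: "'a fps \<Rightarrow> 'a::comm_ring_1 mps"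
  is "\<lambda>F m. if ydeg m = 0 then fps_nth F (Poly_Mapping.lookup m 0) else 0" .

lemma mps_supp_mps_of_fps: "mps_supp (mps_of_fps F) \<subseteq> {m. ydeg m = 0}"
  by (auto simp: mps_supp_def mps_of_fps.rep_eq)

lemma mps_of_fps_one: "mps_of_fps 1 = 1"
proof (rule mps_eqI)
  fix m :: "nat \<Rightarrow>\<^sub>0 nat"
  have "ydeg m = 0 \<and> Poly_Mapping.lookup m 0 = 0 \<longleftrightarrow> m = 0"
    by (metis ydeg_eq_0_iff single_lookup_eq_if_keys_subset single_zero lookup_zero keys_zero
          empty_subsetI)
  then show "mps_nth (mps_of_fps 1) m = mps_nth 1 m"
    by (auto simp: mps_of_fps.rep_eq mps_nth_one)
qed

lemma mps_of_fps_mult: "mps_of_fps (F * G) = mps_of_fps F * mps_of_fps G"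
proof (rule mps_eqI)
  fix m
  show "mps_nth (mps_of_fps (F * G)) m = mps_nth (mps_of_fps F * mps_of_fps G) m"
  proof (cases "ydeg m = 0")
    case True
    then obtain k where m: "m = Poly_Mapping.single 0 k"
      by (metis ydeg_eq_0_iff single_lookup_eq_if_keys_subset)
    have inj: "inj_on (\<lambda>t. (Poly_Mapping.single 0 t, Poly_Mapping.single 0 (k - t))) {..k}"
      by (rule inj_onI) (metis fst_conv lookup_single_eq)
    show ?thesis
      unfolding mps_nth_mult m summand_pairs_single sum.reindex[OF inj]
      by (simp add: mps_of_fps.rep_eq fps_mult_nth atLeast0AtMost)
  next
    case False
    then show ?thesis
      by (auto simp: mps_nth_mult mps_of_fps.rep_eq deg_on_add intro!: sum.neutral)
  qed
qed

lemma x0_series_eq_mps_of_fps: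
  assumes "mps_supp f \<subseteq> {m. ydeg m = 0}"
  shows "f = mps_of_fps (Abs_fps (\<lambda>n. mps_nth f (Poly_Mapping.single 0 n)))"
proof (rule mps_eqI)
  fix m
  show "mps_nth f m = mps_nth (mps_of_fps (Abs_fps (\<lambda>n. mps_nth f (Poly_Mapping.single 0 n)))) m"
  proof (cases "ydeg m = 0")
    case True
    then show ?thesis
      by (simp add: mps_of_fps.rep_eq ydeg_eq_0_iff single_lookup_eq_if_keys_subset)
  next
    case False
    then show ?thesis
      using assms by (simp add: mps_of_fps.rep_eq mps_nth_eq_0_outside_supp)
  qed
qed

lemma x0_series_invertible:
  fixes u :: "'a::field mps"
  assumes "mps_supp u \<subseteq> {m. ydeg m = 0}" and "mps_nth u 0 \<noteq> 0"
  shows "\<exists>w. mps_supp w \<subseteq> {m. ydeg m = 0} \<and> u * w = 1"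
proof -
  define U where "U = Abs_fps (\<lambda>n. mps_nth u (Poly_Mapping.single 0 n))"
  have u: "u = mps_of_fps U"
    unfolding U_def using assms(1) by (rule x0_series_eq_mps_of_fps)
  have "fps_nth U 0 \<noteq> 0"
    using assms(2) by (simp add: U_def)
  then have "u * mps_of_fps (inverse U) = 1"
    by (simp add: u inverse_mult_eq_1' flip: mps_of_fps_mult mps_of_fps_one)
  then show ?thesis
    using mps_supp_mps_of_fps by blast
qed

lift_definition mps_restrict :: "nat set \<Rightarrow> 'a::comm_ring_1 mps \<Rightarrow> 'a mps"
  is "\<lambda>S f m. if Poly_Mapping.keys m \<subseteq> S then f m else 0" .

lemma mps_supp_restrict: "mps_supp (mps_restrict S f) = mps_supp f \<inter> {m. Poly_Mapping.keys m \<subseteq> S}"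
  by (auto simp: mps_supp_def mps_restrict.rep_eq)

lemma mps_restrict_eq_self:
  "mps_supp f \<subseteq> {m. Poly_Mapping.keys m \<subseteq> S} \<Longrightarrow> mps_restrict S f = f"
  by (rule mps_eqI) (auto simp: mps_restrict.rep_eq mps_supp_def)

lemma mps_restrict_add: "mps_restrict S (f + g) = mps_restrict S f + mps_restrict S g"
  by (rule mps_eqI) (simp add: mps_restrict.rep_eq)

lemma mps_restrict_mult: "mps_restrict S (f * g) = mps_restrict S f * mps_restrict S g"
proof (rule mps_eqI)
  fix m
  have "Poly_Mapping.keys m \<subseteq> S \<longleftrightarrow> Poly_Mapping.keys (fst p) \<subseteq> S \<and> Poly_Mapping.keys (snd p) \<subseteq> S"
    if "fst p + snd p = m" for p :: "(nat \<Rightarrow>\<^sub>0 nat) \<times> (nat \<Rightarrow>\<^sub>0 nat)"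
    using that by (auto simp: keys_add_nat)
  then show "mps_nth (mps_restrict S (f * g)) m = mps_nth (mps_restrict S f * mps_restrict S g) m"
    by (cases "Poly_Mapping.keys m \<subseteq> S")
      (auto simp: mps_restrict.rep_eq mps_nth_mult intro!: sum.cong sum.neutral)
qed

section \<open>Completing the square\<close>

lemma ydeg_part0_eq_x0_sq_times_unit:
  fixes T :: "'a::field mps"
  assumes T0_supp: "mps_supp (ydeg_part 0 T) \<subseteq> {m. 2 \<le> Poly_Mapping.lookup m 0}"
    and T_x0_sq: "mps_nth T (Poly_Mapping.single 0 2) \<noteq> 0"
  obtains u w where "mps_supp u \<subseteq> {m. ydeg m = 0}" "mps_supp w \<subseteq> {m. ydeg m = 0}" "u * w = 1"
    "ydeg_part 0 T = mps_var 0 * mps_var 0 * u"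
proof -
  let ?x = "mps_var 0 :: 'a mps"
  define d where "d = mps_div_var 0 (ydeg_part 0 T)"
  define u where "u = mps_div_var 0 d"
  have d_supp: "mps_supp d \<subseteq> {m. 1 \<le> Poly_Mapping.lookup m 0 \<and> ydeg m = 0}"
    using T0_supp by (auto simp: d_def mps_supp_div_var mps_supp_ydeg_part lookup_add)
  have u_supp: "mps_supp u \<subseteq> {m. ydeg m = 0}"
    using d_supp by (auto simp: u_def mps_supp_div_var)
  have "?x * d = ydeg_part 0 T"
    unfolding d_def using T0_supp by (intro mps_var_mult_div_var) auto
  moreover have "?x * u = d"
    unfolding u_def using d_supp by (intro mps_var_mult_div_var) auto
  ultimately have T0: "ydeg_part 0 T = ?x * ?x * u"
    by (simp add: mult.assoc)
  have "mps_nth u 0 = mps_nth T (Poly_Mapping.single 0 1 + Poly_Mapping.single 0 1)"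
    by (simp add: u_def d_def mps_div_var.rep_eq ydeg_part.rep_eq)
  then have "mps_nth u 0 \<noteq> 0"
    using T_x0_sq by (metis single_add one_add_one)
  with u_supp obtain w where "mps_supp w \<subseteq> {m. ydeg m = 0}" "u * w = 1"
    using x0_series_invertible by blast
  with u_supp T0 show thesis
    using that by blast
qed

lemma complete_square_in_x0:
  fixes H :: "'a::field mps"
  assumes two: "(2::'a) \<noteq> 0"
    and H0: "ydeg_part 0 H = mps_var 0 * mps_var 0"
    and H_supp: "mps_supp H \<subseteq> {m. ydeg m = 0 \<or> 3 \<le> mdeg m}"
  obtains a where "mps_supp a \<subseteq> {m. 1 \<le> ydeg m}"
    "mps_supp (H - (mps_var 0 + a) * (mps_var 0 + a)) \<subseteq> {m. 3 \<le> ydeg m}"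
proof -
  let ?x = "mps_var 0 :: 'a mps"
  (* Chosen so that x_0^2 + 2 x_0 A1 + 2 x_0 A2 + A1^2 is the sum of the y-degree 0, 1, 2 parts of H. *)
  define A1 where "A1 = mps_smult (1 / 2) (mps_div_var 0 (ydeg_part 1 H))"
  define Q where "Q = ydeg_part 2 H - A1 * A1"
  define A2 where "A2 = mps_smult (1 / 2) (mps_div_var 0 Q)"
  have H1_supp: "mps_supp (ydeg_part 1 H) \<subseteq> {m. 2 \<le> Poly_Mapping.lookup m 0}"
    using H_supp by (auto simp: mps_supp_ydeg_part mdeg_eq_lookup0_plus_ydeg)
  have A1_supp: "mps_supp A1 \<subseteq> {m. 1 \<le> Poly_Mapping.lookup m 0 \<and> ydeg m = 1}"
    using order_trans[OF mps_supp_smult] H1_supp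
    by (fastforce simp: A1_def mps_supp_div_var mps_supp_ydeg_part lookup_add)
  have x_A1: "?x * (A1 + A1) = ydeg_part 1 H"
    unfolding A1_def mps_half_add_half[OF two] using H1_supp by (intro mps_var_mult_div_var) auto
  have "mps_supp (A1 * A1) \<subseteq> {m. 1 \<le> Poly_Mapping.lookup m 0 \<and> ydeg m = 2}"
    by (rule mps_supp_mult_subset[OF A1_supp A1_supp]) (auto simp: lookup_add deg_on_add)
  moreover have "mps_supp (ydeg_part 2 H) \<subseteq> {m. 1 \<le> Poly_Mapping.lookup m 0 \<and> ydeg m = 2}"
    using H_supp by (auto simp: mps_supp_ydeg_part mdeg_eq_lookup0_plus_ydeg)
  ultimately have Q_supp: "mps_supp Q \<subseteq> {m. 1 \<le> Poly_Mapping.lookup m 0 \<and> ydeg m = 2}"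
    unfolding Q_def using mps_supp_diff by blast
  have A2_supp: "mps_supp A2 \<subseteq> {m. ydeg m = 2}"
    using order_trans[OF mps_supp_smult] Q_supp by (fastforce simp: A2_def mps_supp_div_var)
  have x_A2: "?x * (A2 + A2) = Q"
    unfolding A2_def mps_half_add_half[OF two] using Q_supp by (intro mps_var_mult_div_var) auto
  define R where "R = (A1 + A1) * A2 + A2 * A2"
  have "mps_supp (A1 + A1) \<subseteq> {m. ydeg m = 1}"
    using A1_supp by (intro mps_supp_add_subset) auto
  then have "mps_supp ((A1 + A1) * A2) \<subseteq> {m. 3 \<le> ydeg m}"
    by (rule mps_supp_mult_subset[OF _ A2_supp]) (simp add: deg_on_add)
  moreover have "mps_supp (A2 * A2) \<subseteq> {m. 3 \<le> ydeg m}"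
    by (rule mps_supp_mult_subset[OF A2_supp A2_supp]) (simp add: deg_on_add)
  ultimately have R_supp: "mps_supp R \<subseteq> {m. 3 \<le> ydeg m}"
    unfolding R_def by (rule mps_supp_add_subset)
  have "(?x + (A1 + A2)) * (?x + (A1 + A2)) = ?x * ?x + ?x * (A1 + A1) + ?x * (A2 + A2) + A1 * A1 + R"
    by (simp add: R_def algebra_simps)
  also have "\<dots> = (\<Sum>j<3. ydeg_part j H) + R"
    unfolding x_A1 x_A2 H0[symmetric] Q_def by (simp add: numeral_3_eq_3 numeral_2_eq_2 algebra_simps)
  finally have H_minus_sq: "H - (?x + (A1 + A2)) * (?x + (A1 + A2)) = (H - (\<Sum>j<3. ydeg_part j H)) - R"
    by simp
  have "mps_supp (H - (?x + (A1 + A2)) * (?x + (A1 + A2))) \<subseteq> {m. 3 \<le> ydeg m}"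
    unfolding H_minus_sq by (rule mps_supp_diff_subset[OF mps_supp_diff_ydeg_parts R_supp])
  moreover have "mps_supp (A1 + A2) \<subseteq> {m. 1 \<le> ydeg m}"
    using A1_supp A2_supp by (intro mps_supp_add_subset) auto
  ultimately show thesis
    using that by blast
qed

lemma x0_sq_plus_cubic_eq_unit_times_square:
  fixes G :: "'a::field mps"
  assumes two: "(2::'a) \<noteq> 0"
    and G_supp: "mps_supp G \<subseteq> {m. 3 \<le> mdeg m}"
  obtains u w a G1 where "u * w = 1" "mps_supp a \<subseteq> {m. 1 \<le> ydeg m}" "mps_supp G1 \<subseteq> {m. 3 \<le> ydeg m}"
    "mps_var 0 * mps_var 0 + G = u * ((mps_var 0 + a) * (mps_var 0 + a)) + G1"
proof -
  let ?x = "mps_var 0 :: 'a mps"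
  let ?x2 = "Poly_Mapping.single 0 2 :: nat \<Rightarrow>\<^sub>0 nat"
  have x_sq: "?x * ?x = mps_monom ?x2"
    by (simp only: mps_var_eq_monom mps_monom_mult single_add[symmetric] one_add_one)
  define T where "T = ?x * ?x + G"
  have T_supp: "mps_supp T \<subseteq> {m. m = ?x2 \<or> 3 \<le> mdeg m}"
    unfolding T_def x_sq using G_supp by (intro mps_supp_add_subset) (auto simp: mps_supp_monom)
  then have "mps_supp (ydeg_part 0 T) \<subseteq> {m. 2 \<le> Poly_Mapping.lookup m 0}"
    by (auto simp: mps_supp_ydeg_part mdeg_eq_lookup0_plus_ydeg)
  moreover have "mps_nth G ?x2 = 0"
    using G_supp by (rule mps_nth_eq_0_outside_supp) simp
  then have "mps_nth T ?x2 \<noteq> 0"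
    by (simp add: T_def x_sq mps_nth_monom)
  ultimately obtain u w where w_supp: "mps_supp w \<subseteq> {m. ydeg m = 0}" and uw: "u * w = 1"
    and T0: "ydeg_part 0 T = ?x * ?x * u"
    by (rule ydeg_part0_eq_x0_sq_times_unit)
  define H where "H = T * w"
  have "ydeg_part 0 H = ?x * ?x"
    by (simp add: H_def ydeg_part_mult_x0_series[OF w_supp] T0 uw mult.assoc)
  moreover have "mps_supp H \<subseteq> {m. ydeg m = 0 \<or> 3 \<le> mdeg m}"
    unfolding H_def by (rule mps_supp_mult_subset[OF T_supp w_supp]) (auto simp: deg_on_add mdeg_add)
  ultimately obtain a where a_supp: "mps_supp a \<subseteq> {m. 1 \<le> ydeg m}"
    and rest_supp: "mps_supp (H - (?x + a) * (?x + a)) \<subseteq> {m. 3 \<le> ydeg m}"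
    using complete_square_in_x0[OF two] by blast
  have "mps_supp (u * (H - (?x + a) * (?x + a))) \<subseteq> {m. 3 \<le> ydeg m}"
    by (rule mps_supp_mult_subset[OF subset_UNIV rest_supp]) (simp add: deg_on_add)
  moreover have "?x * ?x + G = u * H"
    unfolding H_def T_def[symmetric] by (metis uw mult.left_commute mult_1_right)
  then have "?x * ?x + G = u * ((?x + a) * (?x + a)) + u * (H - (?x + a) * (?x + a))"
    by (simp add: algebra_simps)
  ultimately show thesis
    using that uw a_supp by blast
qed

section \<open>Ideals and the variables x_0, ..., x_d\<close>

lemma ps_in_iff_mps_supp: "ps_in d (mps_nth f) \<longleftrightarrow> mps_supp f \<subseteq> {m. Poly_Mapping.keys m \<subseteq> {0..d}}"
  by (auto simp: ps_in_def mps_supp_def)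

lemma ps_in_ideal_pow_imp_mps_supp:
  assumes "ps_in_ideal_pow d S n g"
  shows "mps_supp (Abs_mps g) \<subseteq> {m. n \<le> deg_on S m}"
proof -
  obtain h where "g = ps_sum (\<lambda>\<mu>. ps_mult (ps_monom \<mu>) (h \<mu>)) {\<mu>. Poly_Mapping.keys \<mu> \<subseteq> S \<and> mdeg \<mu> = n}"
    using assms unfolding ps_in_ideal_pow_def by blast
  then have "Abs_mps g = (\<Sum>\<mu> | Poly_Mapping.keys \<mu> \<subseteq> S \<and> mdeg \<mu> = n. mps_monom \<mu> * Abs_mps (h \<mu>))"
    by (simp add: Abs_mps_ps_ops)
  also have "mps_supp \<dots> \<subseteq> {m. n \<le> deg_on S m}"
  proof (rule mps_supp_sum_subset)
    fix \<mu> assume "\<mu> \<in> {\<mu>. Poly_Mapping.keys \<mu> \<subseteq> S \<and> mdeg \<mu> = n}"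
    then have "deg_on S \<mu> = n"
      by (simp add: deg_on_eq_mdeg)
    then show "mps_supp (mps_monom \<mu> * Abs_mps (h \<mu>)) \<subseteq> {m. n \<le> deg_on S m}"
      by (intro mps_supp_mult_subset[OF equalityD1[OF mps_supp_monom] subset_UNIV])
        (simp add: deg_on_add)
  qed
  finally show ?thesis .
qed

lemma exists_monomial_divisor_of_deg:
  assumes "n \<le> deg_on S m"
  shows "\<exists>\<mu> r. m = \<mu> + r \<and> Poly_Mapping.keys \<mu> \<subseteq> S \<and> mdeg \<mu> = n"
  using assms
proof (induction n)
  case 0
  show ?case
    by (rule exI[of _ 0]) simp
next
  case (Suc n)
  then obtain \<mu> r where m: "m = \<mu> + r" and \<mu>: "Poly_Mapping.keys \<mu> \<subseteq> S" "mdeg \<mu> = n"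
    by (auto dest: Suc_leD)
  then have "0 < deg_on S r"
    using Suc.prems by (simp add: deg_on_add deg_on_eq_mdeg)
  then have "Poly_Mapping.keys r \<inter> S \<noteq> {}"
    by (auto simp: deg_on_def)
  then obtain i where i: "i \<in> Poly_Mapping.keys r \<inter> S"
    by blast
  let ?e = "Poly_Mapping.single i 1"
  have "m = (\<mu> + ?e) + (r - ?e)"
    unfolding m using i
    by (intro poly_mapping_eqI) (auto simp: lookup_add lookup_minus lookup_single when_def in_keys_iff)
  moreover have "Poly_Mapping.keys (\<mu> + ?e) \<subseteq> S" "mdeg (\<mu> + ?e) = Suc n"
    using \<mu> i by (auto simp: keys_add_nat mdeg_add)
  ultimately show ?case
    by blast
qed

lemma ps_in_ideal_pow_if_mps_supp:
  assumes "finite S"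
    and f_supp: "mps_supp f \<subseteq> {m. Poly_Mapping.keys m \<subseteq> {0..d} \<and> n \<le> deg_on S m}"
  shows "ps_in_ideal_pow d S n (mps_nth f)"
proof -
  define M where "M = {\<mu>. Poly_Mapping.keys \<mu> \<subseteq> S \<and> mdeg \<mu> = n}"
  have "finite M"
    unfolding M_def by (rule finite_subset[OF _ finite_monomials_mdeg_le[OF assms(1), of n]]) auto
  (* Every monomial of f is charged to one chosen divisor of degree n in the variables S. *)
  define divisor where "divisor m = (SOME \<mu>. \<mu> \<in> M \<and> (\<exists>r. m = \<mu> + r))" for m
  have divisor: "divisor m \<in> M \<and> (\<exists>r. m = divisor m + r)" if "m \<in> mps_supp f" for m
  proof -
    have "n \<le> deg_on S m"
      using that f_supp by blast
    then obtain \<mu> r where "m = \<mu> + r" "Poly_Mapping.keys \<mu> \<subseteq> S" "mdeg \<mu> = n"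
      using exists_monomial_divisor_of_deg by blast
    then have "\<exists>\<mu>. \<mu> \<in> M \<and> (\<exists>r. m = \<mu> + r)"
      by (auto simp: M_def)
    then show ?thesis
      unfolding divisor_def by (rule someI_ex)
  qed
  define h where
    "h \<mu> r = (if \<mu> + r \<in> mps_supp f \<and> divisor (\<mu> + r) = \<mu> then mps_nth f (\<mu> + r) else 0)" for \<mu> r
  have h_vars: "ps_in d (h \<mu>)" for \<mu>
    unfolding ps_in_def
  proof (intro allI impI)
    fix r assume "h \<mu> r \<noteq> 0"
    then have "\<mu> + r \<in> mps_supp f"
      by (simp add: h_def split: if_splits)
    then have "Poly_Mapping.keys (\<mu> + r) \<subseteq> {0..d}"
      using f_supp by blast
    then show "Poly_Mapping.keys r \<subseteq> {0..d}"
      by (simp add: keys_add_nat)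
  qed
  have summand: "mps_nth (mps_monom \<mu> * Abs_mps (h \<mu>)) m =
      (if \<mu> = divisor m \<and> m \<in> mps_supp f then mps_nth f m else 0)" for \<mu> m
  proof (cases "\<exists>r. m = \<mu> + r")
    case True
    then obtain r where m: "m = \<mu> + r" by blast
    then show ?thesis
      by (simp add: mps_nth_monom_mult h_def)
  next
    case False
    then have "\<not> (\<mu> = divisor m \<and> m \<in> mps_supp f)"
      using divisor by blast
    with False show ?thesis
      by (auto simp: mps_nth_monom_mult)
  qed
  have "mps_nth f = ps_sum (\<lambda>\<mu>. ps_mult (ps_monom \<mu>) (h \<mu>)) M"
  proof
    fix m
    have "ps_sum (\<lambda>\<mu>. ps_mult (ps_monom \<mu>) (h \<mu>)) M m = (\<Sum>\<mu>\<in>M. mps_nth (mps_monom \<mu> * Abs_mps (h \<mu>)) m)"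
      by (simp add: ps_sum_def times_mps.rep_eq mps_monom.rep_eq)
    also have "\<dots> = (\<Sum>\<mu>\<in>M. if \<mu> = divisor m \<and> m \<in> mps_supp f then mps_nth f m else 0)"
      by (simp only: summand)
    also have "\<dots> = mps_nth f m"
    proof (cases "m \<in> mps_supp f")
      case True
      then show ?thesis
        using divisor[OF True] \<open>finite M\<close> by simp
    next
      case False
      then show ?thesis
        by (simp add: mps_supp_def)
    qed
    finally show "mps_nth f m = ps_sum (\<lambda>\<mu>. ps_mult (ps_monom \<mu>) (h \<mu>)) M m" ..
  qed
  then show ?thesis
    unfolding ps_in_ideal_pow_def M_def using h_vars by blast
qed

lemma x0_sq_plus_cubic_eq_unit_times_square_in_vars:
  fixes G :: "'a::field mps"
  assumes two: "(2::'a) \<noteq> 0"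
    and G_vars: "mps_supp G \<subseteq> {m. Poly_Mapping.keys m \<subseteq> {0..d}}"
    and G_supp: "mps_supp G \<subseteq> {m. 3 \<le> mdeg m}"
  obtains u w a G1 where
    "mps_supp u \<subseteq> {m. Poly_Mapping.keys m \<subseteq> {0..d}}" "mps_supp w \<subseteq> {m. Poly_Mapping.keys m \<subseteq> {0..d}}"
    "u * w = 1"
    "mps_supp a \<subseteq> {m. Poly_Mapping.keys m \<subseteq> {0..d} \<and> 1 \<le> deg_on {1..d} m}"
    "mps_supp G1 \<subseteq> {m. Poly_Mapping.keys m \<subseteq> {0..d} \<and> 3 \<le> deg_on {1..d} m}"
    "mps_var 0 * mps_var 0 + G = u * ((mps_var 0 + a) * (mps_var 0 + a)) + G1"
proof -
  let ?x = "mps_var 0 :: 'a mps"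
  let ?r = "mps_restrict {0..d} :: 'a mps \<Rightarrow> 'a mps"
  obtain u w a G1 where uw: "u * w = 1" and a_supp: "mps_supp a \<subseteq> {m. 1 \<le> ydeg m}"
    and G1_supp: "mps_supp G1 \<subseteq> {m. 3 \<le> ydeg m}"
    and eq: "?x * ?x + G = u * ((?x + a) * (?x + a)) + G1"
    using x0_sq_plus_cubic_eq_unit_times_square[OF two G_supp] by blast
  have r_x: "?r ?x = ?x"
    by (rule mps_restrict_eq_self) (simp add: mps_var_eq_monom mps_supp_monom)
  have "?r (?x * ?x + G) = ?x * ?x + G"
    by (simp add: mps_restrict_add mps_restrict_mult r_x mps_restrict_eq_self[OF G_vars])
  then have "?x * ?x + G = ?r u * ((?x + ?r a) * (?x + ?r a)) + ?r G1"
    unfolding eq by (simp add: mps_restrict_add mps_restrict_mult r_x)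
  moreover have "?r u * ?r w = 1"
    by (simp add: uw mps_one_eq_monom mps_supp_monom mps_restrict_eq_self flip: mps_restrict_mult)
  moreover have "deg_on {1..d} m = ydeg m" if "Poly_Mapping.keys m \<subseteq> {0..d}" for m
    using that by (intro deg_on_cong_keys) auto
  then have "mps_supp (?r a) \<subseteq> {m. Poly_Mapping.keys m \<subseteq> {0..d} \<and> 1 \<le> deg_on {1..d} m}"
    and "mps_supp (?r G1) \<subseteq> {m. Poly_Mapping.keys m \<subseteq> {0..d} \<and> 3 \<le> deg_on {1..d} m}"
    using a_supp G1_supp by (auto simp: mps_supp_restrict)
  ultimately show thesis
    using that[of "?r u" "?r w" "?r a" "?r G1"] by (simp add: mps_supp_restrict)
qed

theorem lemma3p1:
  fixes d :: nat and F G :: "'a::field pser"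
  assumes half: "(2::'a) \<noteq> 0"
    and G_in: "ps_in d G"
    and G_m3: "ps_in_ideal_pow d {0..d} 3 G"
    and F_def: "F = ps_add (ps_sum (\<lambda>i. ps_mult (ps_var i) (ps_var i)) {0..d}) G"
  shows "\<exists>v0 a0 G1.
           ps_in d v0 \<and> ps_unit d v0 \<and>
           ps_in d a0 \<and> ps_in_ideal_pow d {1..d} 1 a0 \<and>
           ps_in d G1 \<and> ps_in_ideal_pow d {1..d} 3 G1 \<and>
           F = ps_add (ps_add (ps_mult v0 (ps_mult (ps_add (ps_var 0) a0) (ps_add (ps_var 0) a0)))
                              (ps_sum (\<lambda>i. ps_mult (ps_var i) (ps_var i)) {1..d}))
                      G1"
proof -
  let ?x = "mps_var 0 :: 'a mps"
  have "mps_supp (Abs_mps G) \<subseteq> {m. Poly_Mapping.keys m \<subseteq> {0..d}}"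
    using G_in by (simp flip: ps_in_iff_mps_supp)
  moreover have "mps_supp (Abs_mps G) \<subseteq> {m. 3 \<le> mdeg m}"
    using ps_in_ideal_pow_imp_mps_supp[OF G_m3] order_trans[OF _ deg_on_le_mdeg] by blast
  ultimately obtain u w a G1 where vars: "mps_supp u \<subseteq> {m. Poly_Mapping.keys m \<subseteq> {0..d}}"
      "mps_supp w \<subseteq> {m. Poly_Mapping.keys m \<subseteq> {0..d}}"
    and uw: "u * w = 1"
    and a_supp: "mps_supp a \<subseteq> {m. Poly_Mapping.keys m \<subseteq> {0..d} \<and> 1 \<le> deg_on {1..d} m}"
    and G1_supp: "mps_supp G1 \<subseteq> {m. Poly_Mapping.keys m \<subseteq> {0..d} \<and> 3 \<le> deg_on {1..d} m}"
    and eq: "?x * ?x + Abs_mps G = u * ((?x + a) * (?x + a)) + G1"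
    by (rule x0_sq_plus_cubic_eq_unit_times_square_in_vars[OF half])
  have "{0..d} = insert 0 {1..d}"
    by auto
  then have F_eq: "Abs_mps F = ?x * ?x + Abs_mps G + (\<Sum>i\<in>{1..d}. mps_var i * mps_var i)"
    by (simp add: F_def Abs_mps_ps_ops algebra_simps)
  show ?thesis
  proof (intro exI conjI)
    show "ps_in d (mps_nth u)" "ps_in d (mps_nth a)" "ps_in d (mps_nth G1)"
      using vars a_supp G1_supp by (auto simp: ps_in_iff_mps_supp)
    show "ps_unit d (mps_nth u)"
      unfolding ps_unit_def using vars uw
      by (metis ps_in_iff_mps_supp times_mps.rep_eq one_mps.rep_eq)
    show "ps_in_ideal_pow d {1..d} 1 (mps_nth a)" "ps_in_ideal_pow d {1..d} 3 (mps_nth G1)"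
      using a_supp G1_supp by (simp_all add: ps_in_ideal_pow_if_mps_supp)
  qed (rule pser_eqI, simp add: F_eq eq Abs_mps_ps_ops mps_nth_inverse)
qed

end
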